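(* Assume the setting of the context. If Assumption (A5) holds, then for every compact interval $I\subset(0,\infty)$ and $r>0$, \[\lim_{\delta\to0}\limsup_{n\to\infty}\sup_{\substack{x,y\in B_{G^n}(\rho,\alpha(n)r):\\ d_{G^n}(x,y)\le\alpha(n)\delta}}\sup_{t\in I}\beta(n)\left|q^n_{\lfloor\gamma(n)t\rfloor}(x)-q^n_{\lfloor\gamma(n)t\rfloor}(y)\right|=0.\]
   Context: Let $(E,d_E)$ be a metric space and $F\subseteq E$ such that $F\cap\overline{B}_E(x,r)$ is compact for all $x\in E$, $r>0$ ($\overline{B}_E$, $B_E$ closed and open balls in $E$). Let $d_F:=d_E|_{F\times F}$, $\rho\in F$, and $\nu$ a Radon measure of full support on $(F,d_F)$ (extended to $E$ by $\nu(A):=\nu(A\cap F)$). For a locally finite connected graph $G$ with at least two vertices and distinguished vertex $\rho(G)$: $d_G$ is the shortest-path metric, $B_G(x,r)$ the open $d_G$-ball; $\mu^G$ a symmetric weight with $\mu^G_{xy}>0$ iff $\{x,y\}$ is an edge; $\mu^G_x:=\sum_y\mu^G_{xy}$; $\nu^G(A):=\sum_{x\in A}\mu^G_x$; $X^G$ the discrete time simple random walk with $P_G(x,y)=\mu^G_{xy}/\mu^G_x$, law $\mathbf{P}^G_x$; $p^G_m(x,y):=\mathbf{P}^G_x(X^G_m=y)/\nu^G(\{y\})$, $q^G_m(x,y):=\frac12(p^G_m+p^G_{m+1})(x,y)$, $q^G_m(x):=q^G_m(\rho(G),x)$; generator $\mathcal{L}_Gf(x)=\sum_yP_G(x,y)(f(y)-f(x))$;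 $(f,g)_G:=\sum_xf(x)g(x)\nu^G(\{x\})$; $\mathcal{E}_G(f,g):=-(\mathcal{L}_Gf,g)_G$ on $\mathcal{F}_G:=\{f:\mathcal{E}_G(f,f)<\infty\}$; resistance metric $R_G(x,y):=\sup\{|f(x)-f(y)|^2/\mathcal{E}_G(f,f):f\in\mathcal{F}_G,\mathcal{E}_G(f,f)>0\}$. $(G^n)_{n\ge1}$ are such graphs with $V(G^n)\subseteq E$, $\rho(G^n)=\rho$; $\nu^n:=\nu^{G^n}$, $q^n:=q^{G^n}$. $(\alpha(n)),(\beta(n)),(\gamma(n))$ are non-negative sequences diverging to $\infty$. Assumption (A5): (i) there is $c>0$ with $d_{G^n}(x,y)\ge c\alpha(n)d_E(x,y)$ for all $x,y\in V(G^n)$, $n\ge1$, and a non-negative $\tilde\alpha(n)=o(\alpha(n))$ such that for each $r>0$ there are $c'<\infty$, $n_0$ with $d_{G^n}(x,y)\le c'\alpha(n)d_E(x,y)+\tilde\alpha(n)$ for all $x,y\in V(G^n)\cap B_E(\rho,r)$, $n\ge n_0$; (ii) for every $x\in F$, $r>0$, $\lim_n\beta(n)^{-1}\nu^n(B_E(x,r))=\nu(B_E(x,r))$; (iii) for some $\kappa\in(0,\infty)$ there exist constants $c_1,c_2,c_3\in(0,\infty)$ and an integer $n_0$ such that $R_{G^n}(x,y)\le c_1d_{G^n}(x,y)^\kappa$ for all $x,y\in V(G^n)$, and $c_2\gamma(n)\le\alpha(n)^\kappa\beta(n)\le c_3\gamma(n)$, for all $n\ge n_0$. *)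

theory Defs
  imports "HOL-Analysis.Analysis" "HOL-Library.Landau_Symbols"
begin

definition gadj :: "'a set \<Rightarrow> ('a \<Rightarrow> 'a \<Rightarrow> real) \<Rightarrow> 'a \<Rightarrow> 'a \<Rightarrow> bool" where
  "gadj V mu x y \<longleftrightarrow> x \<in> V \<and> y \<in> V \<and> mu x y > 0"

definition wgraph :: "'a set \<Rightarrow> ('a \<Rightarrow> 'a \<Rightarrow> real) \<Rightarrow> 'a \<Rightarrow> bool" where
  "wgraph V mu rt \<longleftrightarrow>
     rt \<in> V \<and> (\<exists>x\<in>V. \<exists>y\<in>V. x \<noteq> y) \<and>
     (\<forall>x y. mu x y = mu y x) \<and> (\<forall>x y. mu x y \<ge> 0) \<and>
     (\<forall>x y. mu x y > 0 \<longrightarrow> x \<in> V \<and> y \<in> V \<and> x \<noteq> y) \<and>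
     (\<forall>x\<in>V. finite {y. gadj V mu x y}) \<and>
     (\<forall>x\<in>V. \<forall>y\<in>V. \<exists>k. (gadj V mu ^^ k) x y)"

definition gdist :: "'a set \<Rightarrow> ('a \<Rightarrow> 'a \<Rightarrow> real) \<Rightarrow> 'a \<Rightarrow> 'a \<Rightarrow> nat" where
  "gdist V mu x y = (LEAST k. (gadj V mu ^^ k) x y)"

definition gdeg :: "'a set \<Rightarrow> ('a \<Rightarrow> 'a \<Rightarrow> real) \<Rightarrow> 'a \<Rightarrow> real" where
  "gdeg V mu x = (\<Sum>y\<in>{y. gadj V mu x y}. mu x y)"

definition gmeasure :: "'a set \<Rightarrow> ('a \<Rightarrow> 'a \<Rightarrow> real) \<Rightarrow> 'a set \<Rightarrow> ennreal" where
  "gmeasure V mu A = (\<Sum>\<^sub>\<infinity>x\<in>A \<inter> V. ennreal (gdeg V mu x))"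

definition gtrans :: "'a set \<Rightarrow> ('a \<Rightarrow> 'a \<Rightarrow> real) \<Rightarrow> 'a \<Rightarrow> 'a \<Rightarrow> real" where
  "gtrans V mu x y = mu x y / gdeg V mu x"

primrec gstep :: "'a set \<Rightarrow> ('a \<Rightarrow> 'a \<Rightarrow> real) \<Rightarrow> nat \<Rightarrow> 'a \<Rightarrow> 'a \<Rightarrow> real" where
  "gstep V mu 0 x y = (if x = y then 1 else 0)"
| "gstep V mu (Suc m) x y = (\<Sum>z\<in>{z. gadj V mu x z}. gtrans V mu x z * gstep V mu m z y)"

definition gheat :: "'a set \<Rightarrow> ('a \<Rightarrow> 'a \<Rightarrow> real) \<Rightarrow> nat \<Rightarrow> 'a \<Rightarrow> 'a \<Rightarrow> real" where
  "gheat V mu m x y = gstep V mu m x y / gdeg V mu y"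

definition gq :: "'a set \<Rightarrow> ('a \<Rightarrow> 'a \<Rightarrow> real) \<Rightarrow> nat \<Rightarrow> 'a \<Rightarrow> 'a \<Rightarrow> real" where
  "gq V mu m x y = (gheat V mu m x y + gheat V mu (Suc m) x y) / 2"

definition genergy_dom :: "'a set \<Rightarrow> ('a \<Rightarrow> 'a \<Rightarrow> real) \<Rightarrow> ('a \<Rightarrow> real) set" where
  "genergy_dom V mu =
     {f. (\<lambda>(x,y). mu x y * (f x - f y)\<^sup>2) summable_on (V \<times> V)}"

definition genergy :: "'a set \<Rightarrow> ('a \<Rightarrow> 'a \<Rightarrow> real) \<Rightarrow> ('a \<Rightarrow> real) \<Rightarrow> real" where
  "genergy V mu f = (\<Sum>\<^sub>\<infinity>(x,y)\<in>V \<times> V. mu x y * (f x - f y)\<^sup>2) / 2"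

definition gresist :: "'a set \<Rightarrow> ('a \<Rightarrow> 'a \<Rightarrow> real) \<Rightarrow> 'a \<Rightarrow> 'a \<Rightarrow> ereal" where
  "gresist V mu x y =
     (SUP f\<in>{f \<in> genergy_dom V mu. genergy V mu f > 0}.
        ereal ((f x - f y)\<^sup>2 / genergy V mu f))"

definition radon_full_support_on :: "'a::metric_space set \<Rightarrow> 'a measure \<Rightarrow> bool" where
  "radon_full_support_on F nu \<longleftrightarrow>
     sets nu = sets borel \<and>
     (\<forall>A\<in>sets nu. emeasure nu A = emeasure nu (A \<inter> F)) \<and>
     (\<forall>K. compact K \<longrightarrow> emeasure nu K < \<infinity>) \<and>
     (\<forall>A\<in>sets nu. emeasure nu A = (SUP K\<in>{K. compact K \<and> K \<subseteq> A}. emeasure nu K)) \<and>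
     (\<forall>A\<in>sets nu. emeasure nu A = (INF U\<in>{U. open U \<and> A \<subseteq> U}. emeasure nu U)) \<and>
     (\<forall>x\<in>F. \<forall>r>0. emeasure nu (ball x r) > 0)"

end

theory Submission
  imports Defs
begin

text \<open>
  Let \<open>q\<^sub>m = q\<^sub>m(\<rho>, -)\<close>. Reversibility turns the Dirichlet energy of \<open>q\<^sub>m\<close> into a
  combination of return probabilities to \<open>\<rho>\<close>: \<open>E(q\<^sub>m) = (q\<^sub>2\<^sub>m(\<rho>) - q\<^sub>2\<^sub>m\<^sub>+\<^sub>2(\<rho>)) / 2\<close>,
  and a second non-negative quadratic form shows that \<open>E(q\<^sub>m)\<close> is non-increasing in \<open>m\<close>.
  Telescoping gives \<open>(m - j) E(q\<^sub>m) \<le> q\<^sub>2\<^sub>j(\<rho>) / 2\<close>, and \<open>q\<^sub>2\<^sub>j(\<rho>) \<le> 2/Vol + 2R/j\<close>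
  because on a set \<open>B\<close> of volume \<open>Vol\<close> some point carries \<open>q\<^sub>2\<^sub>j \<le> 1/Vol\<close> while \<open>R\<close>
  bounds the resistance from \<open>\<rho>\<close> to \<open>B\<close>. Together with
  \<open>|q\<^sub>m(x) - q\<^sub>m(y)|\<^sup>2 \<le> R(x,y) E(q\<^sub>m)\<close> and \<open>R(x,y) \<le> c\<^sub>1 d(x,y)\<^sup>\<kappa>\<close>, the scalings
  \<open>Vol \<sim> \<beta>(n)\<close>, \<open>R \<sim> \<alpha>(n)\<^sup>\<kappa>\<close>, \<open>m \<sim> \<gamma>(n) t\<close> and \<open>\<alpha>(n)\<^sup>\<kappa> \<beta>(n) \<sim> \<gamma>(n)\<close> give
  \<open>\<beta>(n) |q\<^sub>m(x) - q\<^sub>m(y)| \<le> C \<delta>\<^sup>\<kappa>\<^sup>/\<^sup>2\<close> for all large \<open>n\<close> whenever \<open>d(x,y) \<le> \<alpha>(n) \<delta>\<close>.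
\<close>

lemma sum_weighted_lincomb_sq:
  fixes w u v :: "'a \<Rightarrow> real"
  shows "(\<Sum>x\<in>S. w x * (a * u x + b * v x) * (a * u x + b * v x)) =
    a*a*(\<Sum>x\<in>S. w x * u x * u x) + 2*a*b*(\<Sum>x\<in>S. w x * u x * v x) + b*b*(\<Sum>x\<in>S. w x * v x * v x)"
proof -
  have "(\<Sum>x\<in>S. w x * (a * u x + b * v x) * (a * u x + b * v x)) =
     (\<Sum>x\<in>S. a*a*(w x * u x * u x) + 2*a*b*(w x * u x * v x) + b*b*(w x * v x * v x))"
    by (rule sum.cong) (auto simp: algebra_simps)
  then show ?thesis by (simp add: sum.distrib sum_distrib_left)
qed

lemma sum_bilinear_lincomb:
  fixes m :: "'a \<Rightarrow> 'a \<Rightarrow> real" and u v :: "'a \<Rightarrow> real"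
  shows "(\<Sum>x\<in>S. \<Sum>y\<in>S. m x y * (a * u x + b * v x) * (a * u y + b * v y)) =
    a*a*(\<Sum>x\<in>S. \<Sum>y\<in>S. m x y * u x * u y)
    + a*b*((\<Sum>x\<in>S. \<Sum>y\<in>S. m x y * u x * v y) + (\<Sum>x\<in>S. \<Sum>y\<in>S. m x y * v x * u y))
    + b*b*(\<Sum>x\<in>S. \<Sum>y\<in>S. m x y * v x * v y)"
proof -
  have "(\<Sum>x\<in>S. \<Sum>y\<in>S. m x y * (a * u x + b * v x) * (a * u y + b * v y)) =
     (\<Sum>x\<in>S. \<Sum>y\<in>S. a*a*(m x y * u x * u y) + a*b*(m x y * u x * v y) + a*b*(m x y * v x * u y)
        + b*b*(m x y * v x * v y))"
    by (intro sum.cong) (auto simp: algebra_simps)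
  then show ?thesis by (simp add: sum.distrib sum_distrib_left distrib_left)
qed

lemma le_of_sq_sub_le_mult:
  fixes x q A C :: real
  assumes "x \<ge> 0" "0 \<le> q" "q \<le> A" "(x - q)\<^sup>2 \<le> C * x" "C \<ge> 0"
  shows "x \<le> 2 * A + 4 * C"
proof (cases "x \<le> 2 * A")
  case False
  then have x: "x / 2 \<le> x - q" "x > 0" using assms by auto
  then have "(x/2)\<^sup>2 \<le> (x - q)\<^sup>2" by (intro power_mono) auto
  then have "x * (x / 4) \<le> x * C" using assms(4) by (simp add: power2_eq_square mult.commute)
  then have "x / 4 \<le> C" using x(2) by (simp add: mult_le_cancel_left_pos)
  then show ?thesis using assms by simp
qed (use assms in simp)

section \<open>Random walks on weighted graphs\<close>

locale weighted_graph =
  fixes V :: "'a set" and mu :: "'a \<Rightarrow> 'a \<Rightarrow> real" and rt :: 'a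
  assumes wgraph: "wgraph V mu rt"
begin

abbreviation "adj \<equiv> gadj V mu"
abbreviation "nbrs x \<equiv> {y. gadj V mu x y}"
abbreviation "deg \<equiv> gdeg V mu"
abbreviation "ptrans \<equiv> gtrans V mu"
abbreviation "pstep \<equiv> gstep V mu"

lemma rt_in_V: "rt \<in> V"
  using wgraph unfolding wgraph_def by auto

lemma mu_sym: "mu x y = mu y x"
  using wgraph unfolding wgraph_def by auto

lemma mu_nonneg: "mu x y \<ge> 0"
  using wgraph unfolding wgraph_def by auto

lemma adj_iff_mu_pos: "adj x y \<longleftrightarrow> mu x y > 0"
  using wgraph unfolding wgraph_def gadj_def by auto

lemma adj_sym: "adj x y \<Longrightarrow> adj y x"
  using adj_iff_mu_pos mu_sym by metis

lemma mu_eq_0_if_not_adj: "\<not> adj x y \<Longrightarrow> mu x y = 0"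
  using adj_iff_mu_pos mu_nonneg by (metis less_eq_real_def)

lemma adj_in_V: "adj x y \<Longrightarrow> x \<in> V \<and> y \<in> V"
  unfolding gadj_def by auto

lemma finite_nbrs: "finite (nbrs x)"
proof (cases "x \<in> V")
  case True
  then show ?thesis using wgraph unfolding wgraph_def by auto
next
  case False
  then have "nbrs x = {}" using adj_in_V by auto
  then show ?thesis by simp
qed

lemma exists_walk: "x \<in> V \<Longrightarrow> y \<in> V \<Longrightarrow> \<exists>k. (adj ^^ k) x y"
  using wgraph unfolding wgraph_def by auto

lemma adj_relpowp_sym: "(adj ^^ k) x y \<Longrightarrow> (adj ^^ k) y x"
proof (induction k arbitrary: x y)
  case (Suc k)
  then obtain z where "(adj ^^ k) x z" "adj z y" by (auto elim: relpowp_Suc_E)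
  then show ?case using Suc.IH adj_sym by (metis relpowp_Suc_I2)
qed simp

lemma deg_eq_sum: "finite S \<Longrightarrow> nbrs x \<subseteq> S \<Longrightarrow> deg x = (\<Sum>y\<in>S. mu x y)"
  unfolding gdeg_def by (rule sum.mono_neutral_left) (auto intro: mu_eq_0_if_not_adj)

lemma deg_nonneg: "deg x \<ge> 0"
  unfolding gdeg_def by (simp add: sum_nonneg mu_nonneg)

lemma deg_eq_0_outside: "x \<notin> V \<Longrightarrow> deg x = 0"
  using adj_in_V unfolding gdeg_def by (metis (no_types, lifting) empty_Collect_eq sum.empty)

lemma deg_pos: "x \<in> V \<Longrightarrow> deg x > 0"
proof -
  assume x: "x \<in> V"
  obtain y where y: "y \<in> V" "y \<noteq> x"
    using wgraph unfolding wgraph_def by metis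
  obtain k where k: "(adj ^^ k) x y" using exists_walk[OF x y(1)] by auto
  with y have "k \<noteq> 0" by (cases k) auto
  with k obtain z where "adj x z" by (metis relpowp_E2)
  then have "mu x z > 0" "z \<in> nbrs x" by (auto simp: adj_iff_mu_pos)
  then have "0 < (\<Sum>y\<in>nbrs x. mu x y)"
    using finite_nbrs by (metis (no_types, lifting) mu_nonneg sum_pos2)
  then show ?thesis unfolding gdeg_def .
qed

lemma deg_mult_ptrans: "deg x * ptrans x y = mu x y"
proof (cases "x \<in> V")
  case True
  then show ?thesis using deg_pos[of x] unfolding gtrans_def by simp
next
  case False
  then have "mu x y = 0" using adj_in_V mu_eq_0_if_not_adj by blast
  then show ?thesis unfolding gtrans_def by simp
qed

lemma ptrans_nonneg: "ptrans x y \<ge> 0"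
  unfolding gtrans_def by (simp add: mu_nonneg deg_nonneg)

lemma ptrans_eq_0_if_not_adj: "\<not> adj x y \<Longrightarrow> ptrans x y = 0"
  unfolding gtrans_def using mu_eq_0_if_not_adj by simp

lemma sum_ptrans_nbrs: "x \<in> V \<Longrightarrow> (\<Sum>y\<in>nbrs x. ptrans x y) = 1"
  using deg_pos[of x] unfolding gtrans_def gdeg_def by (simp add: sum_divide_distrib[symmetric])

lemma pstep_Suc_sum:
  "finite S \<Longrightarrow> nbrs x \<subseteq> S \<Longrightarrow> pstep (Suc k) x y = (\<Sum>z\<in>S. ptrans x z * pstep k z y)"
  by simp (rule sum.mono_neutral_left, auto simp: ptrans_eq_0_if_not_adj)

lemma pstep_nonneg: "pstep k x y \<ge> 0"
  by (induction k arbitrary: x) (auto intro!: sum_nonneg mult_nonneg_nonneg ptrans_nonneg)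

definition reach :: "nat \<Rightarrow> 'a \<Rightarrow> 'a set" where
  "reach k x = {y. (adj ^^ k) x y}"

definition walk_ball :: "nat \<Rightarrow> 'a \<Rightarrow> 'a set" where
  "walk_ball k x = {y. \<exists>i\<le>k. (adj ^^ i) x y}"

lemma reach_Suc: "reach (Suc k) x = (\<Union>z\<in>reach k x. nbrs z)"
  unfolding reach_def by (auto elim: relpowp_Suc_E intro: relpowp_Suc_I)

lemma finite_reach: "finite (reach k x)"
  by (induction k) (simp_all add: reach_def[of 0] reach_Suc finite_nbrs)

lemma finite_walk_ball: "finite (walk_ball k x)"
proof -
  have "walk_ball k x = (\<Union>i\<le>k. reach i x)" unfolding walk_ball_def reach_def by auto
  then show ?thesis using finite_reach by auto
qed

lemma reach_subset_walk_ball: "i \<le> k \<Longrightarrow> reach i x \<subseteq> walk_ball k x"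
  unfolding walk_ball_def reach_def by auto

lemma walk_ball_mono: "i \<le> k \<Longrightarrow> walk_ball i x \<subseteq> walk_ball k x"
  unfolding walk_ball_def using le_trans by blast

lemma nbrs_subset_walk_ball_Suc: "y \<in> walk_ball k x \<Longrightarrow> nbrs y \<subseteq> walk_ball (Suc k) x"
  unfolding walk_ball_def by (auto intro: relpowp_Suc_I)

lemma reach_nbr_subset: "z \<in> nbrs x \<Longrightarrow> reach k z \<subseteq> reach (Suc k) x"
  unfolding reach_def using relpowp_Suc_I2[of adj x z k] by blast

lemma pstep_support: "pstep k x y \<noteq> 0 \<Longrightarrow> y \<in> reach k x"
proof (induction k arbitrary: x)
  case 0
  then show ?case by (auto simp: reach_def split: if_splits)
next
  case (Suc k)
  then obtain z where "z \<in> nbrs x" "pstep k z y \<noteq> 0"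
    by (auto elim: sum.not_neutral_contains_not_neutral)
  then show ?case using Suc.IH reach_nbr_subset by blast
qed

lemma pstep_support_rev: "pstep k y x \<noteq> 0 \<Longrightarrow> y \<in> reach k x"
  using pstep_support adj_relpowp_sym unfolding reach_def by blast

lemma sum_pstep_eq_1:
  "x \<in> V \<Longrightarrow> finite S \<Longrightarrow> reach k x \<subseteq> S \<Longrightarrow> (\<Sum>y\<in>S. pstep k x y) = 1"
proof (induction k arbitrary: x)
  case 0
  then show ?case by (simp add: reach_def)
next
  case (Suc k)
  have "(\<Sum>y\<in>S. pstep (Suc k) x y) = (\<Sum>z\<in>nbrs x. ptrans x z * (\<Sum>y\<in>S. pstep k z y))"
    by (simp add: sum.swap[of _ S] sum_distrib_left)
  also have "\<dots> = (\<Sum>z\<in>nbrs x. ptrans x z)"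
  proof (rule sum.cong)
    fix z assume z: "z \<in> nbrs x"
    then have "z \<in> V" using adj_in_V by auto
    moreover have "reach k z \<subseteq> S" using reach_nbr_subset[OF z] Suc.prems by auto
    ultimately show "ptrans x z * (\<Sum>y\<in>S. pstep k z y) = ptrans x z" using Suc.IH Suc.prems by simp
  qed simp
  also have "\<dots> = 1" using sum_ptrans_nbrs Suc.prems(1) by blast
  finally show ?case .
qed

lemma pstep_add:
  "finite S \<Longrightarrow> reach j x \<subseteq> S \<Longrightarrow> pstep (j + k) x z = (\<Sum>y\<in>S. pstep j x y * pstep k y z)"
proof (induction j arbitrary: x)
  case 0
  have "(\<Sum>y\<in>S. pstep 0 x y * pstep k y z) = (\<Sum>y\<in>S. if x = y then pstep k y z else 0)"
    by (rule sum.cong) auto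
  also have "\<dots> = pstep k x z" using 0 by (simp add: reach_def)
  finally show ?case by simp
next
  case (Suc j)
  have "pstep (Suc j + k) x z = (\<Sum>n\<in>nbrs x. ptrans x n * pstep (j + k) n z)" by simp
  also have "\<dots> = (\<Sum>n\<in>nbrs x. ptrans x n * (\<Sum>y\<in>S. pstep j n y * pstep k y z))"
  proof (rule sum.cong)
    fix n assume "n \<in> nbrs x"
    then have "reach j n \<subseteq> S" using reach_nbr_subset Suc.prems by blast
    then show "ptrans x n * pstep (j + k) n z = ptrans x n * (\<Sum>y\<in>S. pstep j n y * pstep k y z)"
      using Suc.IH Suc.prems by simp
  qed simp
  also have "\<dots> = (\<Sum>y\<in>S. \<Sum>n\<in>nbrs x. ptrans x n * pstep j n y * pstep k y z)"
    by (simp add: sum_distrib_left mult.assoc) (rule sum.swap)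
  also have "\<dots> = (\<Sum>y\<in>S. pstep (Suc j) x y * pstep k y z)"
    by (simp add: sum_distrib_right)
  finally show ?case .
qed

lemma pstep_1: "pstep 1 x y = ptrans x y"
  using finite_nbrs by (simp add: if_distrib sum.delta cong: if_cong) (auto simp: ptrans_eq_0_if_not_adj)

lemma pstep_reversible: "deg x * pstep k x y = deg y * pstep k y x"
proof (induction k arbitrary: x y)
  case (Suc k)
  define S where "S = nbrs x \<union> reach k y"
  have S: "finite S" "nbrs x \<subseteq> S" "reach k y \<subseteq> S"
    unfolding S_def using finite_nbrs finite_reach by auto
  have "deg x * pstep (Suc k) x y = (\<Sum>z\<in>S. deg x * ptrans x z * pstep k z y)"
    using pstep_Suc_sum[OF S(1,2)] by (simp add: sum_distrib_left mult.assoc)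
  also have "\<dots> = (\<Sum>z\<in>S. ptrans z x * (deg z * pstep k z y))"
  proof (rule sum.cong)
    fix z
    have "deg x * ptrans x z = ptrans z x * deg z" by (metis deg_mult_ptrans mu_sym mult.commute)
    then show "deg x * ptrans x z * pstep k z y = ptrans z x * (deg z * pstep k z y)"
      by (simp add: mult.assoc)
  qed simp
  also have "\<dots> = (\<Sum>z\<in>S. ptrans z x * (deg y * pstep k y z))" using Suc.IH by simp
  also have "\<dots> = deg y * (\<Sum>z\<in>S. pstep k y z * pstep 1 z x)"
    unfolding pstep_1 by (simp add: sum_distrib_left mult_ac)
  also have "\<dots> = deg y * pstep (Suc k) y x" using pstep_add[OF S(1,3), of 1 x] by simp
  finally show ?case .
qed simp

section \<open>Energy of the heat kernel\<close>

lemma dirichlet_sums: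
  assumes supp: "\<And>x. g x \<noteq> 0 \<Longrightarrow> x \<in> walk_ball K z"
  defines "S \<equiv> walk_ball (Suc K) z"
  shows "(\<Sum>x\<in>S. \<Sum>y\<in>S. mu x y * (g x - g y)\<^sup>2) =
           2 * ((\<Sum>x\<in>S. deg x * g x * g x) - (\<Sum>x\<in>S. \<Sum>y\<in>S. mu x y * g x * g y))"
    and "(\<Sum>x\<in>S. \<Sum>y\<in>S. mu x y * (g x + g y)\<^sup>2) =
           2 * ((\<Sum>x\<in>S. deg x * g x * g x) + (\<Sum>x\<in>S. \<Sum>y\<in>S. mu x y * g x * g y))"
proof -
  have diag: "(\<Sum>x\<in>S. \<Sum>y\<in>S. mu x y * (g x * g x)) = (\<Sum>x\<in>S. deg x * g x * g x)"
  proof (rule sum.cong)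
    fix x
    show "(\<Sum>y\<in>S. mu x y * (g x * g x)) = deg x * g x * g x"
    proof (cases "g x = 0")
      case False
      then have "nbrs x \<subseteq> S" unfolding S_def by (rule nbrs_subset_walk_ball_Suc[OF supp])
      then have "deg x = (\<Sum>y\<in>S. mu x y)" using deg_eq_sum finite_walk_ball unfolding S_def by blast
      then show ?thesis by (simp add: sum_distrib_right mult.assoc)
    qed simp
  qed simp
  have swap: "(\<Sum>x\<in>S. \<Sum>y\<in>S. mu x y * (g y * g y)) = (\<Sum>x\<in>S. \<Sum>y\<in>S. mu x y * (g x * g x))"
    by (subst sum.swap) (simp add: mu_sym)
  have "(\<Sum>x\<in>S. \<Sum>y\<in>S. mu x y * (g x - g y)\<^sup>2) =
        (\<Sum>x\<in>S. \<Sum>y\<in>S. mu x y * (g x * g x)) + (\<Sum>x\<in>S. \<Sum>y\<in>S. mu x y * (g y * g y))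
         - 2 * (\<Sum>x\<in>S. \<Sum>y\<in>S. mu x y * g x * g y)"
    by (simp add: power2_eq_square algebra_simps sum.distrib sum_subtractf sum_distrib_left)
  then show "(\<Sum>x\<in>S. \<Sum>y\<in>S. mu x y * (g x - g y)\<^sup>2) =
           2 * ((\<Sum>x\<in>S. deg x * g x * g x) - (\<Sum>x\<in>S. \<Sum>y\<in>S. mu x y * g x * g y))"
    using diag swap by simp
  have "(\<Sum>x\<in>S. \<Sum>y\<in>S. mu x y * (g x + g y)\<^sup>2) =
        (\<Sum>x\<in>S. \<Sum>y\<in>S. mu x y * (g x * g x)) + (\<Sum>x\<in>S. \<Sum>y\<in>S. mu x y * (g y * g y))
         + 2 * (\<Sum>x\<in>S. \<Sum>y\<in>S. mu x y * g x * g y)"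
    by (simp add: power2_eq_square algebra_simps sum.distrib sum_distrib_left)
  then show "(\<Sum>x\<in>S. \<Sum>y\<in>S. mu x y * (g x + g y)\<^sup>2) =
           2 * ((\<Sum>x\<in>S. deg x * g x * g x) + (\<Sum>x\<in>S. \<Sum>y\<in>S. mu x y * g x * g y))"
    using diag swap by simp
qed

lemma finite_support_energy:
  assumes supp: "\<And>x. g x \<noteq> 0 \<Longrightarrow> x \<in> walk_ball K z"
  defines "S \<equiv> walk_ball (Suc K) z"
  shows "g \<in> genergy_dom V mu"
    and "genergy V mu g = (\<Sum>x\<in>S. \<Sum>y\<in>S. mu x y * (g x - g y)\<^sup>2) / 2"
proof -
  let ?h = "\<lambda>(x,y). mu x y * (g x - g y)\<^sup>2"
  have in_S: "x \<in> S" if "g x \<noteq> 0" for x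
    using supp[OF that] walk_ball_mono[of K "Suc K"] unfolding S_def by auto
  have closed: "x \<in> S" if "adj x y" "g y \<noteq> 0" for x y
    using nbrs_subset_walk_ball_Suc[OF supp] adj_sym that unfolding S_def by blast
  have outside_V: "?h p = 0" if "p \<in> S \<times> S - V \<times> V" for p
    using that mu_eq_0_if_not_adj adj_in_V by (cases p) auto
  have outside_S: "?h p = 0" if "p \<in> V \<times> V - S \<times> S" for p
  proof (cases p)
    case (Pair x y)
    show ?thesis
    proof (cases "adj x y")
      case True
      have "x \<notin> S \<or> y \<notin> S" using that Pair by auto
      then have "g x = 0 \<and> g y = 0" using in_S closed[OF True] closed[OF adj_sym[OF True]] by blast
      then show ?thesis using Pair by simp
    qed (simp add: Pair mu_eq_0_if_not_adj)
  qed
  have fin: "finite S" unfolding S_def by (rule finite_walk_ball)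
  have "(?h summable_on V \<times> V) = (?h summable_on S \<times> S)"
    by (rule summable_on_cong_neutral) (use outside_S outside_V in auto)
  then show "g \<in> genergy_dom V mu"
    unfolding genergy_dom_def using summable_on_finite fin by auto
  have "infsum ?h (V \<times> V) = infsum ?h (S \<times> S)"
    by (rule infsum_cong_neutral) (use outside_S outside_V in auto)
  also have "\<dots> = (\<Sum>x\<in>S. \<Sum>y\<in>S. mu x y * (g x - g y)\<^sup>2)"
    using fin by (simp add: infsum_finite sum.cartesian_product)
  finally show "genergy V mu g = (\<Sum>x\<in>S. \<Sum>y\<in>S. mu x y * (g x - g y)\<^sup>2) / 2"
    unfolding genergy_def by simp
qed

abbreviation "to_rt k y \<equiv> pstep k y rt"
abbreviation "ret k \<equiv> pstep k rt rt"

lemma sum_deg_to_rt_mult: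
  assumes "i \<le> K" "k = i + l"
  shows "(\<Sum>x\<in>walk_ball K rt. deg x * to_rt i x * to_rt l x) = deg rt * ret k"
proof -
  have "(\<Sum>x\<in>walk_ball K rt. deg x * to_rt i x * to_rt l x)
      = (\<Sum>x\<in>walk_ball K rt. deg rt * (pstep i rt x * to_rt l x))"
    by (rule sum.cong) (auto simp: pstep_reversible[of _ i rt] mult.assoc)
  also have "\<dots> = deg rt * ret k"
    using pstep_add[OF finite_walk_ball reach_subset_walk_ball[OF assms(1)], of l rt] assms(2)
    by (simp add: sum_distrib_left)
  finally show ?thesis .
qed

lemma sum_mu_to_rt_mult:
  assumes "i < K" "k = i + l + 1"
  shows "(\<Sum>x\<in>walk_ball K rt. \<Sum>y\<in>walk_ball K rt. mu x y * to_rt i x * to_rt l y) = deg rt * ret k"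
proof -
  let ?S = "walk_ball K rt"
  have "(\<Sum>x\<in>?S. \<Sum>y\<in>?S. mu x y * to_rt i x * to_rt l y) = (\<Sum>x\<in>?S. deg x * to_rt i x * to_rt (Suc l) x)"
  proof (rule sum.cong)
    fix x
    show "(\<Sum>y\<in>?S. mu x y * to_rt i x * to_rt l y) = deg x * to_rt i x * to_rt (Suc l) x"
    proof (cases "to_rt i x = 0")
      case False
      then have "x \<in> walk_ball i rt" using pstep_support_rev reach_subset_walk_ball by blast
      then have "nbrs x \<subseteq> ?S"
        using nbrs_subset_walk_ball_Suc walk_ball_mono[of "Suc i" K rt] assms(1) by fastforce
      then have "to_rt (Suc l) x = (\<Sum>y\<in>?S. ptrans x y * to_rt l y)"
        using pstep_Suc_sum finite_walk_ball by blast
      then have "deg x * to_rt i x * to_rt (Suc l) x = (\<Sum>y\<in>?S. (deg x * ptrans x y) * to_rt i x * to_rt l y)"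
        by (simp add: sum_distrib_left mult_ac)
      then show ?thesis by (simp add: deg_mult_ptrans)
    qed simp
  qed simp
  also have "\<dots> = deg rt * ret k"
    by (rule sum_deg_to_rt_mult) (use assms in auto)
  finally show ?thesis .
qed

lemma deg_rt_pos: "deg rt > 0"
  using deg_pos rt_in_V by blast

lemma gheat_root: "gheat V mu m rt y = to_rt m y / deg rt"
proof (cases "y \<in> V")
  case True
  then show ?thesis
    using deg_pos[of y] deg_rt_pos pstep_reversible[of rt m y] unfolding gheat_def
    by (simp add: field_simps)
next
  case False
  have "to_rt m y = 0"
  proof (rule ccontr)
    assume "to_rt m y \<noteq> 0"
    then have "(adj ^^ m) rt y" using pstep_support_rev unfolding reach_def by blast
    with False rt_in_V show False
      by (cases m) (auto elim: relpowp_Suc_E dest: adj_in_V)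
  qed
  then show ?thesis using False deg_eq_0_outside unfolding gheat_def by simp
qed

lemma gq_root: "gq V mu m rt y = (1/(2*deg rt)) * to_rt m y + (1/(2*deg rt)) * to_rt (Suc m) y"
  unfolding gq_def gheat_root by (simp add: field_simps)

lemma gq_root_root: "gq V mu m rt rt = (ret m + ret (Suc m)) / (2 * deg rt)"
  unfolding gq_def gheat_def using deg_rt_pos by (simp add: field_simps)

lemma gq_nonneg: "gq V mu m rt y \<ge> 0"
  unfolding gq_def gheat_def by (simp add: pstep_nonneg deg_nonneg del: gstep.simps)

lemma gq_support: "gq V mu m rt y \<noteq> 0 \<Longrightarrow> y \<in> walk_ball (Suc m) rt"
proof -
  assume "gq V mu m rt y \<noteq> 0"
  then have "to_rt m y \<noteq> 0 \<or> to_rt (Suc m) y \<noteq> 0" unfolding gq_root by auto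
  then have "y \<in> reach m rt \<or> y \<in> reach (Suc m) rt" using pstep_support_rev by blast
  then show ?thesis
    using reach_subset_walk_ball[of m "Suc m" rt] reach_subset_walk_ball[of "Suc m" "Suc m" rt] by auto
qed

abbreviation "qenergy m \<equiv> genergy V mu (\<lambda>y. gq V mu m rt y)"
abbreviation "qdiag k \<equiv> gq V mu k rt rt"

lemma gq_energy:
  shows "(\<lambda>y. gq V mu m rt y) \<in> genergy_dom V mu"
    and "qenergy m = (ret (2*m) + ret (2*m+1) - ret (2*m+2) - ret (2*m+3)) / (4 * deg rt)"
proof -
  let ?g = "\<lambda>y. gq V mu m rt y" and ?c = "1/(2*deg rt)"
  let ?S = "walk_ball (Suc (Suc m)) rt"
  show "?g \<in> genergy_dom V mu" by (rule finite_support_energy(1)[where g="?g" and K="Suc m", OF gq_support])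
  have A1: "(\<Sum>x\<in>?S. deg x * to_rt m x * to_rt m x) = deg rt * ret (2*m)"
    and A2: "(\<Sum>x\<in>?S. deg x * to_rt m x * to_rt (Suc m) x) = deg rt * ret (2*m+1)"
    and A3: "(\<Sum>x\<in>?S. deg x * to_rt (Suc m) x * to_rt (Suc m) x) = deg rt * ret (2*m+2)"
    by (rule sum_deg_to_rt_mult; simp)+
  have B1: "(\<Sum>x\<in>?S. \<Sum>y\<in>?S. mu x y * to_rt m x * to_rt m y) = deg rt * ret (2*m+1)"
    and B2: "(\<Sum>x\<in>?S. \<Sum>y\<in>?S. mu x y * to_rt m x * to_rt (Suc m) y) = deg rt * ret (2*m+2)"
    and B3: "(\<Sum>x\<in>?S. \<Sum>y\<in>?S. mu x y * to_rt (Suc m) x * to_rt m y) = deg rt * ret (2*m+2)"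
    and B4: "(\<Sum>x\<in>?S. \<Sum>y\<in>?S. mu x y * to_rt (Suc m) x * to_rt (Suc m) y) = deg rt * ret (2*m+3)"
    by (rule sum_mu_to_rt_mult; simp)+
  have "qenergy m = (\<Sum>x\<in>?S. deg x * ?g x * ?g x) - (\<Sum>x\<in>?S. \<Sum>y\<in>?S. mu x y * ?g x * ?g y)"
    using finite_support_energy(2)[where g="?g" and K="Suc m", OF gq_support]
      dirichlet_sums(1)[where g="?g" and K="Suc m", OF gq_support] by simp
  also have "\<dots> = ?c*?c*(deg rt * ret (2*m)) + 2*?c*?c*(deg rt * ret (2*m+1)) + ?c*?c*(deg rt * ret (2*m+2))
      - (?c*?c*(deg rt * ret (2*m+1)) + ?c*?c*(deg rt * ret (2*m+2) + deg rt * ret (2*m+2))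
         + ?c*?c*(deg rt * ret (2*m+3)))"
    unfolding gq_root sum_weighted_lincomb_sq sum_bilinear_lincomb A1 A2 A3 B1 B2 B3 B4 by simp
  also have "\<dots> = (ret (2*m) + ret (2*m+1) - ret (2*m+2) - ret (2*m+3)) / (4 * deg rt)"
    using deg_rt_pos by (simp add: field_simps)
  finally show "qenergy m = (ret (2*m) + ret (2*m+1) - ret (2*m+2) - ret (2*m+3)) / (4 * deg rt)" .
qed

text \<open>The second difference below equals \<open>\<Sum>\<Sum> mu x y (g x + g y)\<^sup>2 / (2 deg rt)\<close>
  for \<open>g = to_rt m - to_rt (m + 2)\<close>.\<close>

lemma ret_second_diff_nonneg:
  "ret (2*m) + ret (2*m+1) - 2 * ret (2*m+2) - 2 * ret (2*m+3) + ret (2*m+4) + ret (2*m+5) \<ge> 0"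
proof -
  let ?g = "\<lambda>y. 1 * to_rt m y + (-1) * to_rt (m+2) y"
  let ?S = "walk_ball (Suc (m+2)) rt"
  have supp: "?g x \<noteq> 0 \<Longrightarrow> x \<in> walk_ball (m+2) rt" for x
    using pstep_support_rev[of m x rt] pstep_support_rev[of "m+2" x rt]
      reach_subset_walk_ball[of m "m+2" rt] reach_subset_walk_ball[of "m+2" "m+2" rt]
    by (cases "to_rt m x = 0") auto
  have A1: "(\<Sum>x\<in>?S. deg x * to_rt m x * to_rt m x) = deg rt * ret (2*m)"
    and A2: "(\<Sum>x\<in>?S. deg x * to_rt m x * to_rt (m+2) x) = deg rt * ret (2*m+2)"
    and A3: "(\<Sum>x\<in>?S. deg x * to_rt (m+2) x * to_rt (m+2) x) = deg rt * ret (2*m+4)"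
    by (rule sum_deg_to_rt_mult; simp)+
  have B1: "(\<Sum>x\<in>?S. \<Sum>y\<in>?S. mu x y * to_rt m x * to_rt m y) = deg rt * ret (2*m+1)"
    and B2: "(\<Sum>x\<in>?S. \<Sum>y\<in>?S. mu x y * to_rt m x * to_rt (m+2) y) = deg rt * ret (2*m+3)"
    and B3: "(\<Sum>x\<in>?S. \<Sum>y\<in>?S. mu x y * to_rt (m+2) x * to_rt m y) = deg rt * ret (2*m+3)"
    and B4: "(\<Sum>x\<in>?S. \<Sum>y\<in>?S. mu x y * to_rt (m+2) x * to_rt (m+2) y) = deg rt * ret (2*m+5)"
    by (rule sum_mu_to_rt_mult; simp)+
  have "0 \<le> (\<Sum>x\<in>?S. \<Sum>y\<in>?S. mu x y * (?g x + ?g y)\<^sup>2)"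
    by (intro sum_nonneg mult_nonneg_nonneg mu_nonneg) simp
  also have "\<dots> = 2 * ((\<Sum>x\<in>?S. deg x * ?g x * ?g x) + (\<Sum>x\<in>?S. \<Sum>y\<in>?S. mu x y * ?g x * ?g y))"
    by (rule dirichlet_sums(2)[where g="?g", OF supp])
  also have "\<dots> = 2 * (1*1*(deg rt * ret (2*m)) + 2*1*(-1)*(deg rt * ret (2*m+2))
      + (-1)*(-1)*(deg rt * ret (2*m+4)) + (1*1*(deg rt * ret (2*m+1))
      + 1*(-1)*((deg rt * ret (2*m+3)) + (deg rt * ret (2*m+3))) + (-1)*(-1)*(deg rt * ret (2*m+5))))"
    unfolding sum_weighted_lincomb_sq sum_bilinear_lincomb A1 A2 A3 B1 B2 B3 B4 by (rule refl)
  finally have "0 \<le> deg rt *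
      (ret (2*m) + ret (2*m+1) - 2 * ret (2*m+2) - 2 * ret (2*m+3) + ret (2*m+4) + ret (2*m+5))"
    by (simp add: algebra_simps)
  then show ?thesis using deg_rt_pos by (simp add: zero_le_mult_iff)
qed

lemma qenergy_eq_qdiag_diff: "qenergy m = (qdiag (2*m) - qdiag (2*m+2)) / 2"
proof -
  have idx: "Suc (2*m) = 2*m+1" "Suc (2*m+2) = 2*m+3" by simp_all
  have "qdiag (2*m) = (ret (2*m) + ret (2*m+1)) / (2 * deg rt)"
    using gq_root_root[of "2*m", unfolded idx] .
  moreover have "qdiag (2*m+2) = (ret (2*m+2) + ret (2*m+3)) / (2 * deg rt)"
    using gq_root_root[of "2*m+2", unfolded idx] .
  ultimately show ?thesis unfolding gq_energy(2) using deg_rt_pos by (simp add: field_simps)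
qed

lemma qenergy_nonneg: "qenergy m \<ge> 0"
  unfolding genergy_def by (intro divide_nonneg_pos infsum_nonneg) (auto simp: mu_nonneg)

lemma qenergy_Suc_le: "qenergy (Suc m) \<le> qenergy m"
proof -
  have idx: "2*Suc m = 2*m+2" "2*m+2+1 = 2*m+3" "2*m+2+2 = 2*m+4" "2*m+2+3 = 2*m+5"
    by simp_all
  have "qenergy m - qenergy (Suc m) =
     (ret (2*m) + ret (2*m+1) - 2 * ret (2*m+2) - 2 * ret (2*m+3) + ret (2*m+4) + ret (2*m+5))
       / (4 * deg rt)"
    unfolding gq_energy(2) idx by (simp add: diff_divide_distrib add_divide_distrib)
  moreover have "\<dots> \<ge> 0" using ret_second_diff_nonneg deg_rt_pos by simp
  ultimately show ?thesis by simp
qed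

lemma qenergy_telescope: "real d * qenergy (j + d) \<le> (qdiag (2*j) - qdiag (2*(j+d))) / 2"
proof (induction d)
  case (Suc d)
  have "real (Suc d) * qenergy (j + Suc d) = real d * qenergy (j + Suc d) + qenergy (j + Suc d)"
    by (simp add: algebra_simps)
  also have "\<dots> \<le> real d * qenergy (j + d) + qenergy (j + d)"
    using qenergy_Suc_le[of "j+d"] by (intro add_mono mult_left_mono) auto
  also have "\<dots> \<le> (qdiag (2*j) - qdiag (2*(j+d))) / 2 + qenergy (j + d)" using Suc.IH by simp
  also have "\<dots> = (qdiag (2*j) - qdiag (2*(j+Suc d))) / 2"
  proof -
    have "2*(j+Suc d) = 2*(j+d)+2" by simp
    then show ?thesis using qenergy_eq_qdiag_diff[of "j+d"] by (simp only:) (simp add: field_simps)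
  qed
  finally show ?case .
qed simp

lemma qenergy_le_qdiag: "j < m \<Longrightarrow> real (m - j) * qenergy m \<le> qdiag (2*j) / 2"
  using qenergy_telescope[of "m - j" j] gq_nonneg[of "2*m" rt] by simp

lemma gq_const_if_qenergy_eq_0:
  assumes "qenergy m = 0" "x \<in> V" "y \<in> V"
  shows "gq V mu m rt x = gq V mu m rt y"
proof -
  let ?g = "\<lambda>y. gq V mu m rt y" and ?S = "walk_ball (Suc (Suc m)) rt"
  have "(\<Sum>a\<in>?S. \<Sum>b\<in>?S. mu a b * (?g a - ?g b)\<^sup>2) = 0"
    using finite_support_energy(2)[where g="?g", OF gq_support] assms(1) by simp
  then have zero: "\<forall>a\<in>?S. \<forall>b\<in>?S. mu a b * (?g a - ?g b)\<^sup>2 = 0"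
    using finite_walk_ball by (simp add: sum_nonneg_eq_0_iff sum_nonneg mu_nonneg)
  have edge: "?g a = ?g b" if "adj a b" for a b
  proof (cases "a \<in> ?S \<and> b \<in> ?S")
    case True
    then have "mu a b * (?g a - ?g b)\<^sup>2 = 0" using zero by blast
    moreover have "mu a b > 0" using that adj_iff_mu_pos by blast
    ultimately show ?thesis by simp
  next
    case False
    have inner: "walk_ball (Suc m) rt \<subseteq> ?S" by (rule walk_ball_mono) simp
    have "a \<notin> walk_ball (Suc m) rt \<and> b \<notin> walk_ball (Suc m) rt"
      using False inner nbrs_subset_walk_ball_Suc[of a] nbrs_subset_walk_ball_Suc[of b]
        that adj_sym[OF that] by blast
    then have "?g a = 0 \<and> ?g b = 0" using gq_support by blast
    then show ?thesis by simp
  qed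
  have "(adj ^^ k) a b \<Longrightarrow> ?g a = ?g b" for k a b
  proof (induction k arbitrary: b)
    case (Suc k)
    then obtain z where "(adj ^^ k) a z" "adj z b" by (auto elim: relpowp_Suc_E)
    then show ?case using Suc.IH edge by metis
  qed simp
  then show ?thesis using exists_walk assms(2,3) by blast
qed

lemma gq_diff_sq_le_resist:
  assumes "x \<in> V" "y \<in> V" "gresist V mu x y \<le> ereal B"
  shows "(gq V mu m rt x - gq V mu m rt y)\<^sup>2 \<le> B * qenergy m"
proof (cases "qenergy m = 0")
  case True
  then show ?thesis using gq_const_if_qenergy_eq_0[OF True assms(1,2)] by simp
next
  case False
  then have pos: "qenergy m > 0" using qenergy_nonneg[of m] by simp
  let ?g = "\<lambda>y. gq V mu m rt y"
  have "ereal ((?g x - ?g y)\<^sup>2 / qenergy m) \<le> gresist V mu x y"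
    unfolding gresist_def by (rule SUP_upper) (use gq_energy(1) pos in auto)
  then have "ereal ((?g x - ?g y)\<^sup>2 / qenergy m) \<le> ereal B" using assms(3) by (rule order_trans)
  then have "(?g x - ?g y)\<^sup>2 / qenergy m \<le> B" by simp
  then show ?thesis using pos by (simp add: pos_divide_le_eq)
qed

lemma sum_deg_gq_le_1:
  assumes "finite B" "B \<subseteq> V"
  shows "(\<Sum>y\<in>B. deg y * gq V mu k rt y) \<le> 1"
proof -
  have mass: "(\<Sum>y\<in>B. pstep k' rt y) \<le> 1" for k'
  proof -
    have "(\<Sum>y\<in>B. pstep k' rt y) \<le> (\<Sum>y\<in>B \<union> reach k' rt. pstep k' rt y)"
      by (rule sum_mono2) (use assms finite_reach pstep_nonneg in auto)
    also have "\<dots> = 1" by (rule sum_pstep_eq_1) (use rt_in_V assms finite_reach in auto)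
    finally show ?thesis .
  qed
  have "(\<Sum>y\<in>B. deg y * gq V mu k rt y) = (\<Sum>y\<in>B. (pstep k rt y + pstep (Suc k) rt y) / 2)"
  proof (rule sum.cong)
    fix y assume "y \<in> B"
    then have "deg y > 0" using deg_pos assms by blast
    then show "deg y * gq V mu k rt y = (pstep k rt y + pstep (Suc k) rt y) / 2"
      unfolding gq_def gheat_def by (simp add: field_simps)
  qed simp
  also have "\<dots> = ((\<Sum>y\<in>B. pstep k rt y) + (\<Sum>y\<in>B. pstep (Suc k) rt y)) / 2"
    by (simp add: sum.distrib sum_divide_distrib[symmetric])
  also have "\<dots> \<le> 1" using mass[of k] mass[of "Suc k"] by simp
  finally show ?thesis .
qed

text \<open>On-diagonal upper bound: some point of \<open>B\<close> carries at most the average mass \<open>1/Vol\<close>,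
  and the resistance to it controls how far the diagonal value can exceed that.\<close>

lemma qdiag_le:
  assumes B: "finite B" "B \<subseteq> V" and vol: "Vol \<le> (\<Sum>y\<in>B. deg y)" "Vol > 0"
    and res: "\<And>y. y \<in> B \<Longrightarrow> gresist V mu rt y \<le> ereal D" and D: "D \<ge> 0" and j: "j \<ge> 1"
  shows "qdiag (2*j) \<le> 2 / Vol + 2 * D / j"
proof -
  have "B \<noteq> {}" using vol by auto
  have "\<exists>y\<in>B. gq V mu (2*j) rt y \<le> 1 / Vol"
  proof (rule ccontr)
    assume "\<not> ?thesis"
    then have "(\<Sum>y\<in>B. deg y * (1 / Vol)) < (\<Sum>y\<in>B. deg y * gq V mu (2*j) rt y)"
      using B \<open>B \<noteq> {}\<close> deg_pos by (intro sum_strict_mono mult_strict_left_mono) auto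
    also have "\<dots> \<le> 1" by (rule sum_deg_gq_le_1[OF B])
    finally have "(\<Sum>y\<in>B. deg y) / Vol < 1" by (simp add: sum_divide_distrib[symmetric])
    then show False using vol by (simp add: divide_less_eq)
  qed
  then obtain y where y: "y \<in> B" "gq V mu (2*j) rt y \<le> 1 / Vol" by blast
  have "real (2*j - j) * qenergy (2*j) \<le> qdiag (2*j) / 2" by (rule qenergy_le_qdiag) (use j in simp)
  then have "qenergy (2*j) \<le> qdiag (2*j) / (2 * j)" using j by (simp add: field_simps)
  then have "(qdiag (2*j) - gq V mu (2*j) rt y)\<^sup>2 \<le> (D / (2*j)) * qdiag (2*j)"
    using gq_diff_sq_le_resist[OF rt_in_V _ res[OF y(1)], of "2*j"] y B mult_left_mono[OF _ D]
    by (fastforce simp: field_simps)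
  then have "qdiag (2*j) \<le> 2 * (1/Vol) + 4 * (D / (2*j))"
    by (intro le_of_sq_sub_le_mult) (use gq_nonneg y D j in auto)
  then show ?thesis by (simp add: field_simps)
qed

lemma qenergy_bound:
  assumes B: "finite B" "B \<subseteq> V" and vol: "Vol \<le> (\<Sum>y\<in>B. deg y)" "Vol > 0"
    and res: "\<And>y. y \<in> B \<Longrightarrow> gresist V mu rt y \<le> ereal D" and D: "D \<ge> 0" and m: "m \<ge> 2"
  shows "qenergy m \<le> (2 / Vol + 8 * D / m) / m"
proof -
  let ?j = "m div 2"
  have j: "?j \<ge> 1" "?j < m" "real m \<le> 4 * ?j" "real m \<le> 2 * (m - ?j)" using m by auto
  have "real (m - ?j) * qenergy m \<le> qdiag (2*?j) / 2" by (rule qenergy_le_qdiag[OF j(2)])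
  then have "qenergy m \<le> qdiag (2*?j) / (2 * (m - ?j))" using j by (simp add: field_simps)
  also have "\<dots> \<le> (2 / Vol + 2 * D / ?j) / (2 * (m - ?j))"
    by (intro divide_right_mono qdiag_le[OF B vol res D j(1)]) (use j in auto)
  also have "\<dots> \<le> (2 / Vol + 8 * D / m) / m"
  proof (rule frac_le)
    show "2 / Vol + 2 * D / ?j \<le> 2 / Vol + 8 * D / m"
      using j D m by (simp add: field_simps mult_left_mono)
  qed (use j D vol m in auto)
  finally show ?thesis .
qed

lemma gq_increment_bound:
  assumes res: "\<And>x y. x \<in> V \<Longrightarrow> y \<in> V \<Longrightarrow>
                  gresist V mu x y \<le> ereal (c1 * real (gdist V mu x y) powr \<kappa>)"
    and \<kappa>: "\<kappa> \<ge> 0" and c1: "c1 \<ge> 0"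
    and B: "finite B" "B \<subseteq> V" and vol: "Vol \<le> (\<Sum>y\<in>B. deg y)" "Vol > 0"
    and D: "\<And>z. z \<in> B \<Longrightarrow> real (gdist V mu rt z) \<le> D"
    and xy: "x \<in> V" "y \<in> V" "real (gdist V mu x y) \<le> d" and m: "m \<ge> 2"
  shows "(gq V mu m rt x - gq V mu m rt y)\<^sup>2 \<le> c1 * d powr \<kappa> * ((2 / Vol + 8 * (c1 * D powr \<kappa>) / m) / m)"
proof -
  have res_mono: "gresist V mu u v \<le> ereal (c1 * e powr \<kappa>)"
    if "u \<in> V" "v \<in> V" "real (gdist V mu u v) \<le> e" for u v e
    using res[OF that(1,2)] that(3) \<kappa> c1 by (simp add: mult_left_mono powr_mono2 order_trans)
  have "(gq V mu m rt x - gq V mu m rt y)\<^sup>2 \<le> c1 * d powr \<kappa> * qenergy m"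
    by (rule gq_diff_sq_le_resist[OF xy(1,2) res_mono[OF xy]])
  also have "\<dots> \<le> c1 * d powr \<kappa> * ((2 / Vol + 8 * (c1 * D powr \<kappa>) / m) / m)"
    using qenergy_bound[OF B vol res_mono[OF rt_in_V] _ m] B D c1 by (intro mult_left_mono) auto
  finally show ?thesis .
qed

lemma finite_subset_large_volume:
  assumes "ennreal Vol < gmeasure V mu A"
  obtains B where "finite B" "B \<subseteq> A \<inter> V" "Vol \<le> (\<Sum>x\<in>B. deg x)"
proof -
  have "gmeasure V mu A = Sup ((sum (\<lambda>x. ennreal (deg x))) ` {B. finite B \<and> B \<subseteq> A \<inter> V})"
    unfolding gmeasure_def by (rule nonneg_infsum_complete) simp
  with assms obtain B where B: "finite B" "B \<subseteq> A \<inter> V"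
    and less: "ennreal Vol < (\<Sum>x\<in>B. ennreal (deg x))"
    by (auto simp: less_Sup_iff)
  have "(\<Sum>x\<in>B. ennreal (deg x)) = ennreal (\<Sum>x\<in>B. deg x)"
    by (rule sum_ennreal) (rule deg_nonneg)
  with less have "Vol \<le> (\<Sum>x\<in>B. deg x)"
    by (metis ennreal_less_iff less_eq_real_def linorder_not_le sum_nonneg deg_nonneg ennreal_leI)
  with B that show ?thesis by blast
qed

end

section \<open>Uniform bounds along the sequence of graphs\<close>

lemma scaled_bound_arith:
  fixes \<beta> \<nu>0 a \<gamma> P Q W c1 c3 m :: real
  assumes \<beta>: "\<beta> > 0" and \<nu>0: "\<nu>0 > 0" and a: "a > 0"
    and nonneg: "P \<ge> 0" "Q \<ge> 0" "W \<ge> 0" "c1 \<ge> 0" "c3 \<ge> 0"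
    and scale: "\<beta> * P \<le> c3 * \<gamma>" and m: "m > 0" "\<gamma> * a \<le> 2 * m"
  shows "\<beta>\<^sup>2 * (c1 * (P * Q) * ((4 / (\<beta> * \<nu>0) + 8 * (c1 * (W * P)) / m) / m))
           \<le> c1 * Q * (8 * c3 / (\<nu>0 * a) + 32 * c1 * W * c3\<^sup>2 / a\<^sup>2)"
proof -
  define X where "X = \<beta> * P / m"
  have X0: "0 \<le> X" unfolding X_def using \<beta> nonneg m by simp
  have "c3 * \<gamma> * a \<le> c3 * (2 * m)" using m nonneg by (simp add: mult_left_mono mult.assoc)
  then have "c3 * \<gamma> / m \<le> 2 * c3 / a" using a m by (simp add: field_simps)
  then have X: "X \<le> 2 * c3 / a"
    unfolding X_def using scale m by (meson divide_right_mono less_imp_le order_trans)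
  have "\<beta>\<^sup>2 * (c1 * (P * Q) * ((4 / (\<beta> * \<nu>0) + 8 * (c1 * (W * P)) / m) / m))
      = c1 * Q * (4 / \<nu>0 * X + 8 * c1 * W * X\<^sup>2)"
    unfolding X_def using \<beta> m by (simp add: field_simps power2_eq_square)
  also have "\<dots> \<le> c1 * Q * (4 / \<nu>0 * (2 * c3 / a) + 8 * c1 * W * (2 * c3 / a)\<^sup>2)"
    using X X0 \<nu>0 nonneg by (intro mult_left_mono add_mono power_mono) auto
  also have "\<dots> = c1 * Q * (8 * c3 / (\<nu>0 * a) + 32 * c1 * W * c3\<^sup>2 / a\<^sup>2)"
    by (simp add: field_simps power2_eq_square)
  finally show ?thesis .
qed

text \<open>With \<open>Vol = \<beta> \<nu>\<^sub>0/2\<close>, \<open>D = C \<alpha>\<close>, \<open>d = \<alpha> \<delta>\<close> and \<open>m \<approx> \<gamma> t\<close>, the scaling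
  \<open>\<alpha>\<^sup>\<kappa> \<beta> \<le> c3 \<gamma>\<close> makes the graph-level bound independent of the graph.\<close>

lemma scaled_gq_increment_bound:
  fixes \<alpha> \<beta> \<gamma> :: real
  assumes G: "wgraph V mu rt"
    and res: "\<And>x y. x \<in> V \<Longrightarrow> y \<in> V \<Longrightarrow>
                gresist V mu x y \<le> ereal (c1 * real (gdist V mu x y) powr \<kappa>)"
    and \<kappa>: "\<kappa> \<ge> 0" and c1: "c1 \<ge> 0" and c3: "c3 \<ge> 0"
    and \<alpha>: "\<alpha> > 0" and \<beta>: "\<beta> > 0" and scale: "\<alpha> powr \<kappa> * \<beta> \<le> c3 * \<gamma>"
    and a: "a > 0" and \<gamma>: "4 \<le> \<gamma> * a" and t: "a \<le> t" and \<nu>0: "\<nu>0 > 0"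
    and B: "finite B" "B \<subseteq> V" "\<beta> * \<nu>0 / 2 \<le> (\<Sum>x\<in>B. gdeg V mu x)"
    and C: "C \<ge> 0" "\<And>z. z \<in> B \<Longrightarrow> real (gdist V mu rt z) \<le> C * \<alpha>"
    and xy: "x \<in> V" "y \<in> V" "real (gdist V mu x y) \<le> \<alpha> * \<delta>" and \<delta>: "\<delta> > 0"
  shows "\<beta> * \<bar>gq V mu (nat \<lfloor>\<gamma> * t\<rfloor>) rt x - gq V mu (nat \<lfloor>\<gamma> * t\<rfloor>) rt y\<bar>
           \<le> sqrt (c1 * \<delta> powr \<kappa> * (8 * c3 / (\<nu>0 * a) + 32 * c1 * C powr \<kappa> * c3\<^sup>2 / a\<^sup>2))"
proof -
  interpret weighted_graph V mu rt by unfold_locales (rule G)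
  define m where "m = nat \<lfloor>\<gamma> * t\<rfloor>"
  have "\<gamma> > 0"
  proof (rule ccontr)
    assume "\<not> \<gamma> > 0"
    then have "\<gamma> * a \<le> 0" using a by (simp add: mult_nonpos_nonneg)
    then show False using \<gamma> by simp
  qed
  then have "\<gamma> * a \<le> \<gamma> * t" using t by simp
  then have "real m \<ge> \<gamma> * a - 1" unfolding m_def using \<gamma> by linarith
  then have m: "m \<ge> 2" "real m > 0" "\<gamma> * a \<le> 2 * real m" using \<gamma> by linarith+
  have "(gq V mu m rt x - gq V mu m rt y)\<^sup>2
      \<le> c1 * (\<alpha> * \<delta>) powr \<kappa> * ((2 / (\<beta> * \<nu>0 / 2) + 8 * (c1 * (C * \<alpha>) powr \<kappa>) / m) / m)"
    by (rule gq_increment_bound[OF res \<kappa> c1 B(1,2) B(3) _ C(2) xy m(1)]) (use \<beta> \<nu>0 in auto)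
  also have "\<dots> = c1 * (\<alpha> powr \<kappa> * \<delta> powr \<kappa>)
      * ((4 / (\<beta> * \<nu>0) + 8 * (c1 * (C powr \<kappa> * \<alpha> powr \<kappa>)) / m) / m)"
    using \<alpha> \<delta> C(1) by (simp add: powr_mult)
  finally have "\<beta>\<^sup>2 * (gq V mu m rt x - gq V mu m rt y)\<^sup>2
      \<le> \<beta>\<^sup>2 * (c1 * (\<alpha> powr \<kappa> * \<delta> powr \<kappa>)
        * ((4 / (\<beta> * \<nu>0) + 8 * (c1 * (C powr \<kappa> * \<alpha> powr \<kappa>)) / m) / m))"
    by (rule mult_left_mono) simp
  also have "\<dots> \<le> c1 * \<delta> powr \<kappa> * (8 * c3 / (\<nu>0 * a) + 32 * c1 * C powr \<kappa> * c3\<^sup>2 / a\<^sup>2)"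
    by (rule scaled_bound_arith[where \<gamma>=\<gamma>]) (use \<beta> \<nu>0 a c1 c3 scale m in \<open>auto simp: mult.commute\<close>)
  finally show ?thesis unfolding m_def by (intro real_le_rsqrt) (simp add: power_mult_distrib)
qed

lemma radon_ball_measure:
  assumes \<nu>: "radon_full_support_on F \<nu>" and cpt: "compact (F \<inter> cball x r)"
    and x: "x \<in> F" and r: "r > 0"
  obtains \<nu>0 where "\<nu>0 > 0" "emeasure \<nu> (ball x r) = ennreal \<nu>0"
proof -
  note defs = \<nu>[unfolded radon_full_support_on_def]
  have sets: "sets \<nu> = sets borel" using defs by (elim conjE)
  have concentrated: "\<forall>A\<in>sets \<nu>. emeasure \<nu> A = emeasure \<nu> (A \<inter> F)" using defs by (elim conjE)
  have finite: "\<forall>K. compact K \<longrightarrow> emeasure \<nu> K < \<infinity>" using defs by (elim conjE)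
  have support: "\<forall>x\<in>F. \<forall>r>0. emeasure \<nu> (ball x r) > 0" using defs by (elim conjE)
  have "emeasure \<nu> (ball x r) = emeasure \<nu> (ball x r \<inter> F)" using concentrated sets by simp
  also have "\<dots> \<le> emeasure \<nu> (F \<inter> cball x r)"
    using sets compact_imp_closed[OF cpt] by (intro emeasure_mono) auto
  also have "\<dots> < \<infinity>" using finite cpt by blast
  finally have fin: "emeasure \<nu> (ball x r) < \<infinity>" .
  then have "emeasure \<nu> (ball x r) = ennreal (enn2real (emeasure \<nu> (ball x r)))"
    by (simp add: less_top[symmetric])
  moreover have "enn2real (emeasure \<nu> (ball x r)) > 0"
    using support x r fin by (simp add: enn2real_positive_iff)
  ultimately show ?thesis using that by blast
qed

lemma eventually_half_limit_lt:
  fixes g :: "nat \<Rightarrow> ennreal" and b :: "nat \<Rightarrow> real"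
  assumes lim: "(\<lambda>n. g n / ennreal (b n)) \<longlonglongrightarrow> ennreal L" and L: "L > 0"
    and b: "eventually (\<lambda>n. b n > 0) sequentially"
  shows "eventually (\<lambda>n. ennreal (b n * L / 2) < g n) sequentially"
proof -
  have "eventually (\<lambda>n. ennreal (L / 2) < g n / ennreal (b n)) sequentially"
    by (rule order_tendstoD(1)[OF lim]) (use L in \<open>simp add: ennreal_lessI\<close>)
  with b show ?thesis
  proof eventually_elim
    case (elim n)
    show ?case
    proof (cases "g n")
      case (real r)
      with elim have "ennreal (L / 2) < ennreal (r / b n)" by (simp add: divide_ennreal)
      then have "L / 2 < r / b n" using L by (simp add: ennreal_less_iff)
      then have "b n * L / 2 < r" using elim(1) by (simp add: field_simps)
      then show ?thesis using real L elim(1) by (simp add: ennreal_less_iff)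
    qed simp
  qed
qed

lemma eventually_massive_set_near_root:
  assumes graphs: "eventually (\<lambda>n. wgraph (V n) (\<mu> n) \<rho>) sequentially"
    and vol: "eventually (\<lambda>n. ennreal (\<beta> n * \<nu>0 / 2) < gmeasure (V n) (\<mu> n) (ball \<rho> 1)) sequentially"
    and upper: "\<forall>n\<ge>n1. \<forall>x\<in>V n \<inter> ball \<rho> 1. \<forall>y\<in>V n \<inter> ball \<rho> 1.
                  real (gdist (V n) (\<mu> n) x y) \<le> cU * \<alpha> n * dist x y + \<alpha>' n"
    and \<alpha>': "\<forall>n. \<alpha>' n \<ge> 0" "\<alpha>' \<in> o(\<alpha>)" and \<alpha>: "\<And>n. \<alpha> n \<ge> 0"
  shows "eventually (\<lambda>n. \<exists>B. finite B \<and> B \<subseteq> V n \<and> \<beta> n * \<nu>0 / 2 \<le> (\<Sum>x\<in>B. gdeg (V n) (\<mu> n) x)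
           \<and> (\<forall>z\<in>B. real (gdist (V n) (\<mu> n) \<rho> z) \<le> (\<bar>cU\<bar> + 1) * \<alpha> n)) sequentially"
proof -
  have small: "eventually (\<lambda>n. \<alpha>' n \<le> \<alpha> n) sequentially"
    using landau_o.smallD[OF \<alpha>'(2) zero_less_one] by (rule eventually_mono) (use \<alpha>'(1) \<alpha> in auto)
  show ?thesis
    using eventually_ge_at_top[of n1] graphs vol small
  proof eventually_elim
    case (elim n)
    interpret G: weighted_graph "V n" "\<mu> n" \<rho> using elim(2) by unfold_locales
    obtain B where B: "finite B" "B \<subseteq> ball \<rho> 1 \<inter> V n" "\<beta> n * \<nu>0 / 2 \<le> (\<Sum>x\<in>B. G.deg x)"
      using G.finite_subset_large_volume[OF elim(3)] by blast
    have "real (gdist (V n) (\<mu> n) \<rho> z) \<le> (\<bar>cU\<bar> + 1) * \<alpha> n" if z: "z \<in> B" for z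
    proof -
      have "z \<in> V n \<inter> ball \<rho> 1" "\<rho> \<in> V n \<inter> ball \<rho> 1" "n \<ge> n1"
        using z B G.rt_in_V elim(1) by auto
      then have "real (gdist (V n) (\<mu> n) \<rho> z) \<le> cU * \<alpha> n * dist \<rho> z + \<alpha>' n"
        using upper by blast
      also have "cU * \<alpha> n * dist \<rho> z \<le> \<bar>cU\<bar> * \<alpha> n * 1"
        using z B \<alpha>[of n] by (intro mult_mono) (auto simp: dist_commute mult_right_mono)
      finally show ?thesis using elim(4) by (simp add: algebra_simps)
    qed
    then show ?case using B by blast
  qed
qed

lemma eventually_uniform_increment_bound:
  fixes \<alpha> \<beta> \<gamma> :: "nat \<Rightarrow> real"
  assumes graphs: "eventually (\<lambda>n. wgraph (V n) (\<mu> n) \<rho>) sequentially"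
    and resist: "\<forall>n\<ge>n0. (\<forall>x\<in>V n. \<forall>y\<in>V n.
           gresist (V n) (\<mu> n) x y \<le> ereal (c1 * real (gdist (V n) (\<mu> n) x y) powr \<kappa>)) \<and>
           \<alpha> n powr \<kappa> * \<beta> n \<le> c3 * \<gamma> n"
    and \<kappa>: "\<kappa> \<ge> 0" and c1: "c1 \<ge> 0" and c3: "c3 \<ge> 0"
    and \<alpha>_div: "filterlim \<alpha> at_top sequentially"
    and \<beta>_div: "filterlim \<beta> at_top sequentially"
    and \<gamma>_div: "filterlim \<gamma> at_top sequentially"
    and massive: "eventually (\<lambda>n. \<exists>B. finite B \<and> B \<subseteq> V n \<and> \<beta> n * \<nu>0 / 2 \<le> (\<Sum>x\<in>B. gdeg (V n) (\<mu> n) x)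
           \<and> (\<forall>z\<in>B. real (gdist (V n) (\<mu> n) \<rho> z) \<le> C * \<alpha> n)) sequentially"
    and C: "C \<ge> 0" and \<nu>0: "\<nu>0 > 0" and a: "a > 0"
  shows "eventually (\<lambda>n. 0 < \<alpha> n \<and> \<rho> \<in> V n \<and> (\<forall>x\<in>V n. \<forall>y\<in>V n. \<forall>\<delta>>0. \<forall>t\<ge>a.
           real (gdist (V n) (\<mu> n) x y) \<le> \<alpha> n * \<delta> \<longrightarrow>
           0 \<le> \<beta> n * \<bar>gq (V n) (\<mu> n) (nat \<lfloor>\<gamma> n * t\<rfloor>) \<rho> x - gq (V n) (\<mu> n) (nat \<lfloor>\<gamma> n * t\<rfloor>) \<rho> y\<bar> \<and>
           \<beta> n * \<bar>gq (V n) (\<mu> n) (nat \<lfloor>\<gamma> n * t\<rfloor>) \<rho> x - gq (V n) (\<mu> n) (nat \<lfloor>\<gamma> n * t\<rfloor>) \<rho> y\<bar>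
             \<le> sqrt (c1 * \<delta> powr \<kappa> * (8 * c3 / (\<nu>0 * a) + 32 * c1 * C powr \<kappa> * c3\<^sup>2 / a\<^sup>2)))) sequentially"
  using eventually_ge_at_top[of n0] graphs massive
    filterlim_at_top_dense[THEN iffD1, OF \<alpha>_div, rule_format, of 0]
    filterlim_at_top_dense[THEN iffD1, OF \<beta>_div, rule_format, of 0]
    filterlim_at_top_dense[THEN iffD1, OF \<gamma>_div, rule_format, of "4 / a"]
proof eventually_elim
  case (elim n)
  interpret weighted_graph "V n" "\<mu> n" \<rho> using elim(2) by unfold_locales
  obtain B where B: "finite B" "B \<subseteq> V n" "\<beta> n * \<nu>0 / 2 \<le> (\<Sum>x\<in>B. gdeg (V n) (\<mu> n) x)"
    "\<And>z. z \<in> B \<Longrightarrow> real (gdist (V n) (\<mu> n) \<rho> z) \<le> C * \<alpha> n"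
    using elim(3) by blast
  have \<gamma>: "4 \<le> \<gamma> n * a" using elim(6) a by (simp add: field_simps)
  have "\<beta> n * \<bar>gq (V n) (\<mu> n) (nat \<lfloor>\<gamma> n * t\<rfloor>) \<rho> x - gq (V n) (\<mu> n) (nat \<lfloor>\<gamma> n * t\<rfloor>) \<rho> y\<bar>
             \<le> sqrt (c1 * \<delta> powr \<kappa> * (8 * c3 / (\<nu>0 * a) + 32 * c1 * C powr \<kappa> * c3\<^sup>2 / a\<^sup>2))"
    if "x \<in> V n" "y \<in> V n" "real (gdist (V n) (\<mu> n) x y) \<le> \<alpha> n * \<delta>" "\<delta> > 0" "a \<le> t" for x y \<delta> t
    by (rule scaled_gq_increment_bound[OF elim(2) _ \<kappa> c1 c3 elim(4,5) _ a \<gamma> that(5) \<nu>0 B(1-3) C B(4) that(1-4)])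
       (use resist elim(1) in auto)
  then show ?case using elim(4,5) rt_in_V by auto
qed

lemma limsup_SUP_SUP_tendsto_0:
  fixes S :: "real \<Rightarrow> nat \<Rightarrow> ('b \<times> 'b) set" and g :: "nat \<Rightarrow> 'b \<Rightarrow> 'b \<Rightarrow> 'c \<Rightarrow> real"
    and \<omega> :: "real \<Rightarrow> real"
  assumes \<omega>: "(\<omega> \<longlongrightarrow> 0) (at_right 0)" and T: "T \<noteq> {}"
    and bound: "\<And>\<delta>. \<delta> > 0 \<Longrightarrow> eventually (\<lambda>n. S \<delta> n \<noteq> {} \<and>
                   (\<forall>(x, y)\<in>S \<delta> n. \<forall>t\<in>T. 0 \<le> g n x y t \<and> g n x y t \<le> \<omega> \<delta>)) sequentially"
  shows "((\<lambda>\<delta>. limsup (\<lambda>n. SUP (x, y) \<in> S \<delta> n. SUP t \<in> T. ereal (g n x y t))) \<longlongrightarrow> 0) (at_right 0)"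
proof -
  let ?M = "\<lambda>\<delta> n. SUP (x, y) \<in> S \<delta> n. SUP t \<in> T. ereal (g n x y t)"
  have M_nonneg: "0 \<le> ?M \<delta> n"
    if ne: "S \<delta> n \<noteq> {}" and nonneg: "\<forall>(x, y)\<in>S \<delta> n. \<forall>t\<in>T. 0 \<le> g n x y t" for \<delta> n
  proof -
    obtain x y where p: "(x, y) \<in> S \<delta> n" using ne by (metis ex_in_conv prod.collapse)
    obtain t where t: "t \<in> T" using T by auto
    have "0 \<le> g n x y t" using nonneg p t by auto
    then have "0 \<le> (SUP t \<in> T. ereal (g n x y t))" using t by (auto intro: SUP_upper2)
    also have "\<dots> \<le> ?M \<delta> n"
      using SUP_upper[OF p, of "\<lambda>(x, y). SUP t \<in> T. ereal (g n x y t)"] by simp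
    finally show ?thesis .
  qed
  have M_le: "?M \<delta> n \<le> ereal (\<omega> \<delta>)"
    if "\<forall>(x, y)\<in>S \<delta> n. \<forall>t\<in>T. g n x y t \<le> \<omega> \<delta>" for \<delta> n
    using that by (auto intro!: SUP_least)
  have lower: "0 \<le> limsup (?M \<delta>)" and upper: "limsup (?M \<delta>) \<le> ereal (\<omega> \<delta>)" if "\<delta> > 0" for \<delta>
  proof -
    have "eventually (\<lambda>n. 0 \<le> ?M \<delta> n) sequentially"
      using bound[OF that] by (rule eventually_mono) (intro M_nonneg; blast)
    then show "0 \<le> limsup (?M \<delta>)" by (intro le_Limsup) simp_all
    have "eventually (\<lambda>n. ?M \<delta> n \<le> ereal (\<omega> \<delta>)) sequentially"
      using bound[OF that] by (rule eventually_mono) (intro M_le; blast)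
    then show "limsup (?M \<delta>) \<le> ereal (\<omega> \<delta>)" by (rule Limsup_bounded)
  qed
  have \<omega>': "((\<lambda>\<delta>. ereal (\<omega> \<delta>)) \<longlongrightarrow> 0) (at_right 0)"
    using tendsto_ereal[OF \<omega>] by (simp add: zero_ereal_def)
  have "\<forall>\<^sub>F \<delta> in at_right 0. 0 \<le> limsup (?M \<delta>)"
    using eventually_at_right_less[of "0::real"] by (rule eventually_mono) (rule lower)
  moreover have "\<forall>\<^sub>F \<delta> in at_right 0. limsup (?M \<delta>) \<le> ereal (\<omega> \<delta>)"
    using eventually_at_right_less[of "0::real"] by (rule eventually_mono) (rule upper)
  ultimately show ?thesis by (rule tendsto_sandwich[OF _ _ tendsto_const \<omega>'])
qed

lemma tendsto_sqrt_mult_powr_0: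
  fixes c \<kappa> K :: real
  assumes "\<kappa> > 0"
  shows "((\<lambda>\<delta>. sqrt (c * \<delta> powr \<kappa> * K)) \<longlongrightarrow> 0) (at_right 0)"
proof -
  have "((\<lambda>\<delta>::real. \<delta> powr \<kappa>) \<longlongrightarrow> 0) (at_right 0)"
    by (rule tendsto_zero_powrI)
       (auto intro: tendsto_ident_at eventually_mono[OF eventually_at_right_less] simp: assms)
  then have "((\<lambda>\<delta>. sqrt (c * \<delta> powr \<kappa> * K)) \<longlongrightarrow> sqrt (c * 0 * K)) (at_right 0)"
    by (intro tendsto_real_sqrt tendsto_mult tendsto_const)
  then show ?thesis by simp
qed

lemma gdist_refl: "gdist V mu x x = 0"
  unfolding gdist_def by (rule Least_eq_0) simp

theorem proposition4p6:
  fixes F :: "'a::metric_space set" and \<rho> :: 'a and \<nu> :: "'a measure"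
    and V :: "nat \<Rightarrow> 'a set" and \<mu> :: "nat \<Rightarrow> 'a \<Rightarrow> 'a \<Rightarrow> real"
    and \<alpha> \<beta> \<gamma> :: "nat \<Rightarrow> real"
  assumes F_proper: "\<And>x r. r > 0 \<Longrightarrow> compact (F \<inter> cball x r)"
    and \<rho>_F: "\<rho> \<in> F"
    and \<nu>_radon: "radon_full_support_on F \<nu>"
    and graphs: "\<And>n. n \<ge> 1 \<Longrightarrow> wgraph (V n) (\<mu> n) \<rho>"
    and \<alpha>_nonneg: "\<And>n. \<alpha> n \<ge> 0" and \<beta>_nonneg: "\<And>n. \<beta> n \<ge> 0" and \<gamma>_nonneg: "\<And>n. \<gamma> n \<ge> 0"
    and \<alpha>_div: "filterlim \<alpha> at_top sequentially"
    and \<beta>_div: "filterlim \<beta> at_top sequentially"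
    and \<gamma>_div: "filterlim \<gamma> at_top sequentially"
    (* (A5)(i) *)
    and A5i_lower: "\<exists>c>0. \<forall>n\<ge>1. \<forall>x\<in>V n. \<forall>y\<in>V n.
                      real (gdist (V n) (\<mu> n) x y) \<ge> c * \<alpha> n * dist x y"
    and A5i_upper: "\<exists>\<alpha>'::nat \<Rightarrow> real. (\<forall>n. \<alpha>' n \<ge> 0) \<and> \<alpha>' \<in> o(\<alpha>) \<and>
                      (\<forall>r>0. \<exists>c'. \<exists>n0. \<forall>n\<ge>n0. \<forall>x\<in>V n \<inter> ball \<rho> r. \<forall>y\<in>V n \<inter> ball \<rho> r.
                         real (gdist (V n) (\<mu> n) x y) \<le> c' * \<alpha> n * dist x y + \<alpha>' n)"
    (* (A5)(ii) *)
    and A5ii: "\<And>x r. x \<in> F \<Longrightarrow> r > 0 \<Longrightarrow>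
                 (\<lambda>n. gmeasure (V n) (\<mu> n) (ball x r) / ennreal (\<beta> n))
                   \<longlonglongrightarrow> emeasure \<nu> (ball x r)"
    (* (A5)(iii) *)
    and A5iii: "\<exists>\<kappa>>0. \<exists>c1>0. \<exists>c2>0. \<exists>c3>0. \<exists>n0. \<forall>n\<ge>n0.
                  (\<forall>x\<in>V n. \<forall>y\<in>V n.
                     gresist (V n) (\<mu> n) x y \<le> ereal (c1 * real (gdist (V n) (\<mu> n) x y) powr \<kappa>)) \<and>
                  c2 * \<gamma> n \<le> \<alpha> n powr \<kappa> * \<beta> n \<and> \<alpha> n powr \<kappa> * \<beta> n \<le> c3 * \<gamma> n"
    and I_pos: "0 < a" and I_le: "a \<le> b"
    and r_pos: "r > 0"
  shows "((\<lambda>\<delta>. limsup (\<lambda>n.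
            SUP (x, y) \<in> {(x, y). x \<in> V n \<and> y \<in> V n \<and>
                        real (gdist (V n) (\<mu> n) \<rho> x) < \<alpha> n * r \<and>
                        real (gdist (V n) (\<mu> n) \<rho> y) < \<alpha> n * r \<and>
                        real (gdist (V n) (\<mu> n) x y) \<le> \<alpha> n * \<delta>}.
              SUP t \<in> {a..b}.
                ereal (\<beta> n * \<bar>gq (V n) (\<mu> n) (nat \<lfloor>\<gamma> n * t\<rfloor>) \<rho> x
                              - gq (V n) (\<mu> n) (nat \<lfloor>\<gamma> n * t\<rfloor>) \<rho> y\<bar>)))
          \<longlongrightarrow> 0) (at_right 0)"
proof -
  obtain \<kappa> c1 c3 n0 where \<kappa>: "\<kappa> > 0" and c1: "c1 > 0" and c3: "c3 > 0"
    and resist: "\<forall>n\<ge>n0. (\<forall>x\<in>V n. \<forall>y\<in>V n.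
           gresist (V n) (\<mu> n) x y \<le> ereal (c1 * real (gdist (V n) (\<mu> n) x y) powr \<kappa>)) \<and>
           \<alpha> n powr \<kappa> * \<beta> n \<le> c3 * \<gamma> n"
    using A5iii by blast
  obtain \<alpha>' cU n1 where \<alpha>': "\<forall>n. \<alpha>' n \<ge> 0" "\<alpha>' \<in> o(\<alpha>)"
    and upper: "\<forall>n\<ge>n1. \<forall>x\<in>V n \<inter> ball \<rho> 1. \<forall>y\<in>V n \<inter> ball \<rho> 1.
                  real (gdist (V n) (\<mu> n) x y) \<le> cU * \<alpha> n * dist x y + \<alpha>' n"
    using A5i_upper by (meson zero_less_one)
  obtain \<nu>0 where \<nu>0: "\<nu>0 > 0" "emeasure \<nu> (ball \<rho> 1) = ennreal \<nu>0"
    using radon_ball_measure[OF \<nu>_radon F_proper[OF zero_less_one] \<rho>_F zero_less_one] .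
  have graphs': "eventually (\<lambda>n. wgraph (V n) (\<mu> n) \<rho>) sequentially"
    using graphs by (rule eventually_sequentiallyI)
  note volume = eventually_half_limit_lt[OF A5ii[OF \<rho>_F zero_less_one, unfolded \<nu>0(2)] \<nu>0(1)
      filterlim_at_top_dense[THEN iffD1, OF \<beta>_div, rule_format, of 0]]
  note uniform = eventually_uniform_increment_bound[OF graphs' resist less_imp_le[OF \<kappa>]
      less_imp_le[OF c1] less_imp_le[OF c3] \<alpha>_div \<beta>_div \<gamma>_div
      eventually_massive_set_near_root[OF graphs' volume upper \<alpha>' \<alpha>_nonneg]
      add_nonneg_nonneg[OF abs_ge_zero zero_le_one] \<nu>0(1) I_pos]
  define K where "K = 8 * c3 / (\<nu>0 * a) + 32 * c1 * (\<bar>cU\<bar> + 1) powr \<kappa> * c3\<^sup>2 / a\<^sup>2"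
  show ?thesis
  proof (rule limsup_SUP_SUP_tendsto_0[OF tendsto_sqrt_mult_powr_0[OF \<kappa>, of c1 K]], goal_cases)
    case 1
    show ?case using I_le by simp
  next
    case (2 \<delta>)
    from uniform show ?case
      by eventually_elim (use 2 r_pos in \<open>auto simp: K_def gdist_refl ex_in_conv[symmetric] intro!: exI[of _ \<rho>]\<close>)
  qed
qed

end
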